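(* Let $p_1$ and $p_2$ be probability densities on $\mathbb{R}^n$ and $\omega\in[0,1]$, and let $\mathbf{M}^h_\omega(p_1,p_2)=\frac{1}{\zeta^h}\frac{p_1p_2}{(1-\omega)p_1+\omega p_2}$ be the normalized harmonic mean density, where $\zeta^h=\int_{\mathbb{R}^n}\frac{p_1(\mathbf{x})p_2(\mathbf{x})}{(1-\omega)p_1(\mathbf{x})+\omega p_2(\mathbf{x})}d\mathbf{x}$ (assumed positive). Then \[ \mathbb{D}\big(p_1:\mathbf{M}^h_\omega(p_1,p_2)\big)\le \mathbb{D}(p_1:p_2)\quad\text{and}\quad \mathbb{D}\big(p_2:\mathbf{M}^h_\omega(p_1,p_2)\big)\le \mathbb{D}(p_2:p_1). \]
   Context: $\mathbb{D}(p:q)=\int p(\mathbf{x})\ln\frac{p(\mathbf{x})}{q(\mathbf{x})}d\mathbf{x}\in[0,\infty]$ denotes the (forward) Kullback–Leibler divergence from $p$ to $q$; in general $\mathbb{D}(p:q)\neq\mathbb{D}(q:p)$. The quotient in the harmonic mean is taken to be $0$ where its numerator vanishes. *)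

theory Defs
  imports "HOL-Analysis.Analysis"
begin

definition is_density :: "('a::euclidean_space \<Rightarrow> real) \<Rightarrow> bool" where
  "is_density p \<longleftrightarrow> p \<in> borel_measurable borel \<and> (\<forall>x. 0 \<le> p x)
      \<and> (\<integral>\<^sup>+ x. ennreal (p x) \<partial>lborel) = 1"

definition kl_integrand :: "('a \<Rightarrow> real) \<Rightarrow> ('a \<Rightarrow> real) \<Rightarrow> 'a \<Rightarrow> ereal" where
  "kl_integrand p q x =
     (if p x = 0 then 0 else if q x = 0 then \<infinity> else ereal (p x * ln (p x / q x)))"

definition KL_div :: "('a::euclidean_space \<Rightarrow> real) \<Rightarrow> ('a \<Rightarrow> real) \<Rightarrow> ereal" where
  "KL_div p q =
     enn2ereal (\<integral>\<^sup>+ x. e2ennreal (kl_integrand p q x) \<partial>lborel)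
   - enn2ereal (\<integral>\<^sup>+ x. e2ennreal (- kl_integrand p q x) \<partial>lborel)"

definition harm :: "real \<Rightarrow> ('a \<Rightarrow> real) \<Rightarrow> ('a \<Rightarrow> real) \<Rightarrow> 'a \<Rightarrow> real" where
  "harm w p1 p2 x =
     (if p1 x * p2 x = 0 then 0 else p1 x * p2 x / ((1 - w) * p1 x + w * p2 x))"

definition harm_norm_const :: "real \<Rightarrow> ('a::euclidean_space \<Rightarrow> real) \<Rightarrow> ('a \<Rightarrow> real) \<Rightarrow> real" where
  "harm_norm_const w p1 p2 = (\<integral> x. harm w p1 p2 x \<partial>lborel)"

definition harm_mean_density :: "real \<Rightarrow> ('a::euclidean_space \<Rightarrow> real) \<Rightarrow> ('a \<Rightarrow> real) \<Rightarrow> 'a \<Rightarrow> real" where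
  "harm_mean_density w p1 p2 x = harm w p1 p2 x / harm_norm_const w p1 p2"

end

theory Submission
  imports Defs
begin

text \<open>Write \<open>d = (1 - w) p + w q\<close>, \<open>h = p q / d\<close> and \<open>z = \<integral> h\<close>, so that
  \<open>M = h / z\<close>. Pointwise \<open>p ln (p / M) = p ln (p / q) + p ln z + p ln (d / p)\<close>, and
  \<open>ln t \<le> t - 1\<close> bounds the last two terms by \<open>p (z - 1) + w (q - p)\<close>, which integrates
  to \<open>z - 1 \<le> 0\<close> because the weighted harmonic mean \<open>h\<close> is dominated by the arithmetic
  mean \<open>w p + (1 - w) q\<close>. Since the divergences are extended-real integrals, this correction
  is integrated on both sides and cancelled afterwards; that needs the negative part of
  \<open>p ln (p / M)\<close> to be integrable, and it is bounded by \<open>M\<close>. Exchanging \<open>p, q\<close> and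
  \<open>w, 1 - w\<close> gives the second inequality.\<close>

definition ereal_integral :: "'a measure \<Rightarrow> ('a \<Rightarrow> ereal) \<Rightarrow> ereal" where
  "ereal_integral M f =
     enn2ereal (\<integral>\<^sup>+ x. e2ennreal (f x) \<partial>M) - enn2ereal (\<integral>\<^sup>+ x. e2ennreal (- f x) \<partial>M)"

lemma KL_div_eq_ereal_integral: "KL_div p q = ereal_integral lborel (kl_integrand p q)"
  by (simp add: KL_div_def ereal_integral_def)

lemma e2ennreal_parts_le:
  fixes f g :: ereal and a b :: real
  assumes "f + ereal a \<le> g + ereal b" and "0 \<le> a" and "0 \<le> b"
  shows "e2ennreal f + e2ennreal (- g) + ennreal a \<le> e2ennreal g + e2ennreal (- f) + ennreal b"
proof (cases f; cases g)
  fix x y assume [simp]: "f = ereal x" "g = ereal y"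
  have split: "ennreal t = ennreal (max t 0)" for t :: real
    by (simp add: max_def ennreal_neg)
  have "ennreal x + ennreal (- y) + ennreal a = ennreal (max x 0 + max (- y) 0 + a)"
    using assms by (subst (1 2) split) simp
  also have "\<dots> \<le> ennreal (max y 0 + max (- x) 0 + b)"
    using assms by (intro ennreal_leI) auto
  also have "\<dots> = ennreal y + ennreal (- x) + ennreal b"
    using assms by (simp flip: split)
  finally show ?thesis by simp
qed (use assms in auto)

lemma enn2ereal_diff_le_diff:
  fixes a b c d :: ennreal
  assumes "a + d \<le> c + b" and "b < \<infinity>"
  shows "enn2ereal a - enn2ereal b \<le> enn2ereal c - enn2ereal d"
proof -
  obtain r where r: "enn2ereal b = ereal r"
    using assms(2) by (cases b) auto
  have "enn2ereal a + enn2ereal d \<le> enn2ereal c + ereal r"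
    using assms(1) r by (simp add: less_eq_ennreal.rep_eq plus_ennreal.rep_eq)
  then show ?thesis
    unfolding r using enn2ereal_nonneg[of a] enn2ereal_nonneg[of c] enn2ereal_nonneg[of d]
    by (cases "enn2ereal a"; cases "enn2ereal c"; cases "enn2ereal d") auto
qed

lemma ereal_integral_mono_compensated:
  fixes f g :: "'a \<Rightarrow> ereal" and a b :: "'a \<Rightarrow> real"
  assumes [measurable]: "f \<in> borel_measurable M" "g \<in> borel_measurable M"
      "a \<in> borel_measurable M" "b \<in> borel_measurable M"
    and "\<And>x. 0 \<le> a x" and "\<And>x. 0 \<le> b x"
    and "\<And>x. f x + ereal (a x) \<le> g x + ereal (b x)"
    and "(\<integral>\<^sup>+ x. ennreal (b x) \<partial>M) \<le> (\<integral>\<^sup>+ x. ennreal (a x) \<partial>M)"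
    and "(\<integral>\<^sup>+ x. ennreal (a x) \<partial>M) < \<infinity>"
    and "(\<integral>\<^sup>+ x. e2ennreal (- f x) \<partial>M) < \<infinity>"
  shows "ereal_integral M f \<le> ereal_integral M g"
proof -
  let ?I = "\<lambda>h. \<integral>\<^sup>+ x. h x \<partial>M"
  have "?I (\<lambda>x. e2ennreal (f x)) + ?I (\<lambda>x. e2ennreal (- g x)) + ?I (\<lambda>x. ennreal (a x))
      = ?I (\<lambda>x. e2ennreal (f x) + e2ennreal (- g x) + ennreal (a x))"
    by (simp add: nn_integral_add)
  also have "\<dots> \<le> ?I (\<lambda>x. e2ennreal (g x) + e2ennreal (- f x) + ennreal (b x))"
    using assms(5-7) by (intro nn_integral_mono e2ennreal_parts_le)
  also have "\<dots> = ?I (\<lambda>x. e2ennreal (g x)) + ?I (\<lambda>x. e2ennreal (- f x)) + ?I (\<lambda>x. ennreal (b x))"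
    by (simp add: nn_integral_add)
  also have "\<dots> \<le> ?I (\<lambda>x. e2ennreal (g x)) + ?I (\<lambda>x. e2ennreal (- f x)) + ?I (\<lambda>x. ennreal (a x))"
    using assms(8) by (rule add_left_mono)
  finally have "?I (\<lambda>x. e2ennreal (f x)) + ?I (\<lambda>x. e2ennreal (- g x))
      \<le> ?I (\<lambda>x. e2ennreal (g x)) + ?I (\<lambda>x. e2ennreal (- f x))"
    using assms(9) by (auto simp: add.commute[of _ "?I (\<lambda>x. ennreal (a x))"])
  then show ?thesis
    unfolding ereal_integral_def using assms(10) by (rule enn2ereal_diff_le_diff)
qed

lemma measurable_harm [measurable]:
  assumes [measurable]: "p \<in> borel_measurable M" "q \<in> borel_measurable M"
  shows "harm w p q \<in> borel_measurable M"
  unfolding harm_def[abs_def] by measurable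

lemma measurable_kl_integrand [measurable]:
  assumes [measurable]: "p \<in> borel_measurable M" "q \<in> borel_measurable M"
  shows "kl_integrand p q \<in> borel_measurable M"
  unfolding kl_integrand_def[abs_def] by measurable

lemma harm_swap: "harm w p q = harm (1 - w) q p"
  by (rule ext) (simp add: harm_def algebra_simps)

lemma harm_norm_const_swap: "harm_norm_const w p q = harm_norm_const (1 - w) q p"
  by (simp add: harm_norm_const_def harm_swap[of w p q])

lemma harm_mean_density_swap: "harm_mean_density w p q = harm_mean_density (1 - w) q p"
  by (simp add: harm_mean_density_def[abs_def] harm_norm_const_swap[of w p q] harm_swap[of w p q])

lemma convex_comb_pos:
  fixes a b w :: real
  assumes "0 < a" and "0 < b" and "0 \<le> w" and "w \<le> 1"
  shows "0 < (1 - w) * a + w * b"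
  using assms by (cases "w = 1") (auto intro: add_pos_nonneg)

lemma harm_nonneg:
  assumes "0 \<le> p x" and "0 \<le> q x" and "0 \<le> w" and "w \<le> 1"
  shows "0 \<le> harm w p q x"
  using assms by (simp add: harm_def)

lemma harm_le_arith_mean:
  assumes "0 \<le> p x" and "0 \<le> q x" and "0 \<le> w" and "w \<le> 1"
  shows "harm w p q x \<le> w * p x + (1 - w) * q x"
proof (cases "p x * q x = 0")
  case True
  then show ?thesis using assms by (simp add: harm_def)
next
  case False
  define d where "d = (1 - w) * p x + w * q x"
  have "0 < d"
    using False assms unfolding d_def by (intro convex_comb_pos) auto
  have "d * (w * p x + (1 - w) * q x) - p x * q x = w * (1 - w) * (p x - q x)\<^sup>2"
    unfolding d_def by (simp add: algebra_simps power2_eq_square)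
  moreover have "0 \<le> w * (1 - w) * (p x - q x)\<^sup>2"
    using assms by simp
  ultimately have "p x * q x \<le> d * (w * p x + (1 - w) * q x)"
    by linarith
  moreover have "harm w p q x = p x * q x / d"
    using False by (simp add: harm_def d_def)
  ultimately show ?thesis
    using \<open>0 < d\<close> by (simp add: pos_divide_le_eq mult.commute)
qed

lemma is_densityD:
  assumes "is_density p"
  shows "p \<in> borel_measurable borel" and "0 \<le> p x" and "(\<integral>\<^sup>+ x. ennreal (p x) \<partial>lborel) = 1"
  using assms by (auto simp: is_density_def)

lemma nn_integral_cmult_density:
  assumes "is_density p" and "0 \<le> c"
  shows "(\<integral>\<^sup>+ x. ennreal (c * p x) \<partial>lborel) = ennreal c"
proof -
  note [measurable] = is_densityD(1)[OF assms(1)]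
  have "(\<integral>\<^sup>+ x. ennreal (c * p x) \<partial>lborel) = (\<integral>\<^sup>+ x. ennreal c * ennreal (p x) \<partial>lborel)"
    using assms by (intro nn_integral_cong) (simp add: ennreal_mult is_densityD(2))
  also have "\<dots> = ennreal c"
    by (simp add: nn_integral_cmult is_densityD(3)[OF assms(1)])
  finally show ?thesis .
qed

lemma nn_integral_harm_le_one:
  assumes p: "is_density p" and q: "is_density q" and "0 \<le> w" and "w \<le> 1"
  shows "(\<integral>\<^sup>+ x. ennreal (harm w p q x) \<partial>lborel) \<le> 1"
proof -
  note [measurable] = is_densityD(1)[OF p] is_densityD(1)[OF q]
  have "(\<integral>\<^sup>+ x. ennreal (harm w p q x) \<partial>lborel)
      \<le> (\<integral>\<^sup>+ x. ennreal (w * p x) + ennreal ((1 - w) * q x) \<partial>lborel)"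
    using assms by (intro nn_integral_mono)
      (simp add: harm_le_arith_mean is_densityD(2) ennreal_leI flip: ennreal_plus)
  also have "\<dots> = ennreal w + ennreal (1 - w)"
    using assms by (simp add: nn_integral_add nn_integral_cmult_density)
  also have "\<dots> = 1"
    using assms by (simp flip: ennreal_plus)
  finally show ?thesis .
qed

lemma nn_integral_harm:
  assumes p: "is_density p" and q: "is_density q" and "0 \<le> w" and "w \<le> 1"
  shows "(\<integral>\<^sup>+ x. ennreal (harm w p q x) \<partial>lborel) = ennreal (harm_norm_const w p q)"
proof -
  note [measurable] = is_densityD(1)[OF p] is_densityD(1)[OF q]
  have "harm_norm_const w p q = enn2real (\<integral>\<^sup>+ x. ennreal (harm w p q x) \<partial>lborel)"
    unfolding harm_norm_const_def using assms
    by (intro integral_eq_nn_integral) (auto simp: harm_nonneg is_densityD(2))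
  moreover have "(\<integral>\<^sup>+ x. ennreal (harm w p q x) \<partial>lborel) < \<infinity>"
    using nn_integral_harm_le_one[OF assms] by (simp add: le_less_trans)
  ultimately show ?thesis by simp
qed

lemma harm_norm_const_le_one:
  assumes "is_density p" and "is_density q" and "0 \<le> w" and "w \<le> 1"
  shows "harm_norm_const w p q \<le> 1"
  using nn_integral_harm_le_one[OF assms] by (simp add: nn_integral_harm[OF assms])

lemma is_density_harm_mean_density:
  assumes p: "is_density p" and q: "is_density q" and "0 \<le> w" and "w \<le> 1"
    and z: "0 < harm_norm_const w p q"
  shows "is_density (harm_mean_density w p q)"
proof -
  note [measurable] = is_densityD(1)[OF p] is_densityD(1)[OF q]
  define z where "z = harm_norm_const w p q"
  have M: "harm_mean_density w p q = (\<lambda>x. harm w p q x / z)"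
    by (simp add: harm_mean_density_def[abs_def] z_def)
  have "(\<integral>\<^sup>+ x. ennreal (harm w p q x / z) \<partial>lborel)
      = (\<integral>\<^sup>+ x. ennreal (1 / z) * ennreal (harm w p q x) \<partial>lborel)"
    using assms z_def by (intro nn_integral_cong)
      (simp add: harm_nonneg is_densityD(2) flip: ennreal_mult)
  also have "\<dots> = ennreal (1 / z) * ennreal z"
    using assms by (simp add: nn_integral_cmult nn_integral_harm z_def)
  also have "\<dots> = 1"
    using z by (simp add: z_def flip: ennreal_mult)
  finally show ?thesis
    using assms unfolding M is_density_def by (auto simp: harm_nonneg is_densityD(2) z_def)
qed

lemma neg_kl_integrand_le:
  assumes "0 \<le> p x" and "0 \<le> q x"
  shows "- kl_integrand p q x \<le> ereal (q x)"
proof (cases "p x = 0 \<or> q x = 0")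
  case True
  then show ?thesis using assms by (auto simp: kl_integrand_def)
next
  case False
  with assms have "0 < p x" "0 < q x" by auto
  then have "- (p x * ln (p x / q x)) = p x * ln (q x / p x)"
    by (simp add: ln_div algebra_simps)
  also have "\<dots> \<le> p x * (q x / p x - 1)"
    using \<open>0 < p x\<close> \<open>0 < q x\<close> by (intro mult_left_mono ln_le_minus_one) auto
  also have "\<dots> \<le> q x"
    using \<open>0 < p x\<close> \<open>0 < q x\<close> by (simp add: field_simps)
  finally show ?thesis
    using False by (simp add: kl_integrand_def)
qed

lemma nn_integral_kl_integrand_neg_finite:
  assumes "\<And>x. 0 \<le> p x" and "is_density q"
  shows "(\<integral>\<^sup>+ x. e2ennreal (- kl_integrand p q x) \<partial>lborel) < \<infinity>"
proof -
  have "(\<integral>\<^sup>+ x. e2ennreal (- kl_integrand p q x) \<partial>lborel) \<le> (\<integral>\<^sup>+ x. ennreal (q x) \<partial>lborel)"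
    using assms by (intro nn_integral_mono)
      (metis e2ennreal_ereal e2ennreal_mono is_densityD(2) neg_kl_integrand_le)
  then show ?thesis
    using is_densityD(3)[OF assms(2)] by (simp add: le_less_trans)
qed

lemma ln_ratio_harm_mean_le:
  fixes a b w z :: real
  assumes a: "0 < a" and b: "0 < b" and w: "0 \<le> w" "w \<le> 1" and z: "0 < z"
  shows "a * ln (a / (a * b / ((1 - w) * a + w * b) / z)) + (1 - z + w) * a
    \<le> a * ln (a / b) + w * b"
proof -
  define d where "d = (1 - w) * a + w * b"
  have d: "0 < d"
    unfolding d_def using a b w by (rule convex_comb_pos)
  have "ln (a / (a * b / d / z)) = ln (a / b) + ln z + ln (d / a)"
    using a b d z by (simp add: ln_div ln_mult)
  moreover have "ln z \<le> z - 1"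
    using z by (rule ln_le_minus_one)
  moreover have "ln (d / a) \<le> d / a - 1"
    using a d by (intro ln_le_minus_one) simp
  ultimately have "a * ln (a / (a * b / d / z)) \<le> a * (ln (a / b) + (z - 1) + (d / a - 1))"
    using a by (intro mult_left_mono) linarith+
  also have "\<dots> = a * ln (a / b) + w * b - (1 - z + w) * a"
    using a unfolding d_def by (simp add: field_simps)
  finally show ?thesis
    unfolding d_def by simp
qed

lemma kl_integrand_harm_mean_le:
  assumes "0 \<le> p x" and "0 \<le> q x" and "0 \<le> w" and "w \<le> 1" and "0 < z"
  shows "kl_integrand p (\<lambda>x. harm w p q x / z) x + ereal ((1 - z + w) * p x)
    \<le> kl_integrand p q x + ereal (w * q x)"
proof (cases "p x = 0 \<or> q x = 0")
  case True
  then show ?thesis using assms by (auto simp: kl_integrand_def)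
next
  case False
  with assms have p: "0 < p x" and q: "0 < q x" by auto
  have "0 < (1 - w) * p x + w * q x"
    using p q assms(3,4) by (rule convex_comb_pos)
  then show ?thesis
    using False p q \<open>0 < z\<close> ln_ratio_harm_mean_le[OF p q assms(3-5)]
    by (simp add: kl_integrand_def harm_def)
qed

lemma KL_div_harm_mean_density_le:
  fixes p q :: "'a::euclidean_space \<Rightarrow> real"
  assumes p: "is_density p" and q: "is_density q" and w: "0 \<le> w" "w \<le> 1"
    and "0 < harm_norm_const w p q"
  shows "KL_div p (harm_mean_density w p q) \<le> KL_div p q"
proof -
  define z where "z = harm_norm_const w p q"
  define M where "M = harm_mean_density w p q"
  have M_density: "is_density M"
    unfolding M_def using assms by (rule is_density_harm_mean_density)
  note [measurable] = is_densityD(1)[OF p] is_densityD(1)[OF q] is_densityD(1)[OF M_density]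
  have "0 < z" and "z \<le> 1"
    using assms harm_norm_const_le_one[OF p q w] by (simp_all add: z_def)
  have M_eq: "M = (\<lambda>x. harm w p q x / z)"
    by (simp add: M_def harm_mean_density_def[abs_def] z_def)
  have pointwise: "kl_integrand p M x + ereal ((1 - z + w) * p x)
      \<le> kl_integrand p q x + ereal (w * q x)" for x
    unfolding M_eq using is_densityD(2)[OF p] is_densityD(2)[OF q] w \<open>0 < z\<close>
    by (rule kl_integrand_harm_mean_le)
  have slack: "(\<integral>\<^sup>+ x. ennreal (w * q x) \<partial>lborel) \<le> (\<integral>\<^sup>+ x. ennreal ((1 - z + w) * p x) \<partial>lborel)"
    using w \<open>z \<le> 1\<close> by (simp add: nn_integral_cmult_density p q)
  have finite: "(\<integral>\<^sup>+ x. ennreal ((1 - z + w) * p x) \<partial>lborel) < \<infinity>"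
    using w \<open>z \<le> 1\<close> by (simp add: nn_integral_cmult_density p)
  have neg_finite: "(\<integral>\<^sup>+ x. e2ennreal (- kl_integrand p M x) \<partial>lborel) < \<infinity>"
    using is_densityD(2)[OF p] M_density by (rule nn_integral_kl_integrand_neg_finite)
  show ?thesis
    unfolding KL_div_eq_ereal_integral M_def[symmetric]
    by (rule ereal_integral_mono_compensated[OF _ _ _ _ _ _ pointwise slack finite neg_finite])
      (use w \<open>z \<le> 1\<close> in \<open>auto simp: is_densityD(2)[OF p] is_densityD(2)[OF q]\<close>)
qed

theorem proposition1:
  fixes p1 p2 :: "real ^ 'n \<Rightarrow> real" and w :: real
  assumes "is_density p1" and "is_density p2"
    and "0 \<le> w" and "w \<le> 1"
    and "harm_norm_const w p1 p2 > 0"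
  shows "KL_div p1 (harm_mean_density w p1 p2) \<le> KL_div p1 p2
       \<and> KL_div p2 (harm_mean_density w p1 p2) \<le> KL_div p2 p1"
proof
  show "KL_div p1 (harm_mean_density w p1 p2) \<le> KL_div p1 p2"
    using assms by (rule KL_div_harm_mean_density_le)
  have "0 < harm_norm_const (1 - w) p2 p1"
    using assms(5) by (simp add: harm_norm_const_swap[of w p1 p2])
  then show "KL_div p2 (harm_mean_density w p1 p2) \<le> KL_div p2 p1"
    unfolding harm_mean_density_swap[of w p1 p2] using assms
    by (intro KL_div_harm_mean_density_le) auto
qed

end
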